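(* Let $\phi:\mathbb{R}^4\to\mathbb{R}^4$ be an arbitrary map. The following are equivalent: (a) $\phi$ is continuous, satisfies $\langle r_1-r_2,r_1-r_2\rangle=0\Rightarrow\langle\phi(r_1)-\phi(r_2),\phi(r_1)-\phi(r_2)\rangle=0$ for all $r_1,r_2\in\mathbb{R}^4$, and its range is included in a light cone. (b) There exist a countable set $J$, a family $(U_j)_{j\in J}$ of pairwise disjoint open subsets of $\mathbb{R}^4$, a family $(s_j)_{j\in J}$ of vectors of $\mathcal{Q}$, a point $s'\in\mathbb{R}^4$ and a continuous map $f:\mathbb{R}^4\to\mathbb{R}$ such that: (i) for all distinct $j,j'\in J$ and all $r\in U_j$, $r'\in U_{j'}$, one has $\langle r-r',r-r'\rangle\neq0$; (ii) $f$ vanishes everywhere on $\mathbb{R}^4\setminus\bigcup_{j\in J}U_j$; (iii) for all $r\in\mathbb{R}^4$, $\phi(r)=s'+f(r)\,s_j$ if $r\in U_j$ (for some $j\in J$), and $\phi(r)=s'$ otherwise.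
   Context: $\mathbb{R}^4=\{(x,y,z,t)\}$ carries its standard topology and the inner product $\langle (x,y,z,t),(u,v,w,s)\rangle=-xu-yv-zw+ts$. For $r\in\mathbb{R}^4$, the light cone with vertex $r$ is $\{s: \langle s-r,s-r\rangle=0\}$. $\mathcal{Q}=\{(x,y,z,1): x^2+y^2+z^2=1\}$. *)

theory Defs
  imports "HOL-Analysis.Analysis"
begin

text \<open>R^4 = {(x,y,z,t)} modelled as real^4 with coordinates 1,2,3,4 = x,y,z,t.
  Minkowski form <(x,y,z,t),(u,v,w,s)> = -xu - yv - zw + ts.\<close>

definition mink :: "real^4 \<Rightarrow> real^4 \<Rightarrow> real" where
  "mink a b = - a$1 * b$1 - a$2 * b$2 - a$3 * b$3 + a$4 * b$4"

definition light_cone :: "real^4 \<Rightarrow> (real^4) set" where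
  "light_cone r = {s. mink (s - r) (s - r) = 0}"

definition QQ :: "(real^4) set" where
  "QQ = {v. v$4 = 1 \<and> (v$1)^2 + (v$2)^2 + (v$3)^2 = 1}"

end

theory Submission
  imports Defs
begin

text \<open>Write \<open>\<phi>(r) = c + f(r) \<sigma>(r)\<close>, where \<open>c\<close> is the vertex of the light cone, \<open>f(r)\<close> is the
  time component of \<open>\<phi>(r) - c\<close> and \<open>\<sigma>(r) \<in> \<Q>\<close> wherever \<open>f(r) \<noteq> 0\<close>. Nonzero multiples of two
  distinct points of \<open>\<Q>\<close> never differ by a null vector, so \<open>\<sigma>\<close> is constant along lightlike
  segments inside the open set \<open>{f \<noteq> 0}\<close>. Every small displacement is a chain of lightlike
  segments (a step along a coordinate axis is two of them), hence \<open>\<sigma>\<close> is locally constant,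
  and its level sets are countably many disjoint open sets, no two of which contain
  lightlike-related points. Conversely, under (b) the images of two lightlike-related points
  differ by a multiple of a single null vector, and near every point
  \<open>|\<phi>(y) - \<phi>(x)| \<le> \<surd>2 |f(y) - f(x)|\<close>.\<close>

abbreviation lightlike :: "real^4 \<Rightarrow> bool" where
  "lightlike v \<equiv> mink v v = 0"

lemma mink_scaleR: "mink (a *\<^sub>R v) (a *\<^sub>R v) = a\<^sup>2 * mink v v"
  by (simp add: mink_def power2_eq_square algebra_simps)

lemma lightlike_QQ: "v \<in> QQ \<Longrightarrow> lightlike v"
  by (simp add: QQ_def mink_def power2_eq_square)

lemma lightlike_time_zero_imp_zero:
  assumes "lightlike v" "v$4 = 0"
  shows "v = 0"
proof -
  have "(v$1)\<^sup>2 + (v$2)\<^sup>2 + (v$3)\<^sup>2 = 0"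
    using assms by (simp add: mink_def power2_eq_square)
  then have "v$1 = 0 \<and> v$2 = 0 \<and> v$3 = 0"
    by (smt (verit) zero_le_power2 power_eq_0_iff)
  then show ?thesis
    using assms(2) by (simp add: vec_eq_iff forall_4)
qed

lemma lightlike_normalized_in_QQ:
  assumes "lightlike v" "v$4 \<noteq> 0"
  shows "(1 / v$4) *\<^sub>R v \<in> QQ"
proof -
  have "(v$1)\<^sup>2 + (v$2)\<^sup>2 + (v$3)\<^sup>2 = (v$4)\<^sup>2"
    using assms(1) by (simp add: mink_def power2_eq_square)
  then have "(v$1 / v$4)\<^sup>2 + (v$2 / v$4)\<^sup>2 + (v$3 / v$4)\<^sup>2 = 1"
    using assms(2) by (simp add: power_divide add_divide_distrib[symmetric])
  then show ?thesis
    using assms(2) by (simp add: QQ_def)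
qed

lemma QQ_eq_if_lightlike_diff:
  assumes u: "u \<in> QQ" and v: "v \<in> QQ" and "a \<noteq> 0" "b \<noteq> 0"
    and null: "lightlike (a *\<^sub>R u - b *\<^sub>R v)"
  shows "u = v"
proof -
  have u4: "u$4 = 1" and u_unit: "(u$1)\<^sup>2 + (u$2)\<^sup>2 + (u$3)\<^sup>2 = 1"
    and v4: "v$4 = 1" and v_unit: "(v$1)\<^sup>2 + (v$2)\<^sup>2 + (v$3)\<^sup>2 = 1"
    using u v by (auto simp: QQ_def)
  have "mink (a *\<^sub>R u - b *\<^sub>R v) (a *\<^sub>R u - b *\<^sub>R v)
      = 2 * a * b * (u$1 * v$1 + u$2 * v$2 + u$3 * v$3 - 1)
        - a\<^sup>2 * ((u$1)\<^sup>2 + (u$2)\<^sup>2 + (u$3)\<^sup>2 - 1) - b\<^sup>2 * ((v$1)\<^sup>2 + (v$2)\<^sup>2 + (v$3)\<^sup>2 - 1)"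
    using u4 v4 by (simp add: mink_def power2_eq_square algebra_simps)
  with null u_unit v_unit \<open>a \<noteq> 0\<close> \<open>b \<noteq> 0\<close>
  have "u$1 * v$1 + u$2 * v$2 + u$3 * v$3 = 1"
    by simp
  with u_unit v_unit have "(u$1 - v$1)\<^sup>2 + (u$2 - v$2)\<^sup>2 + (u$3 - v$3)\<^sup>2 = 0"
    by (simp add: power2_eq_square algebra_simps)
  then have "u$1 = v$1 \<and> u$2 = v$2 \<and> u$3 = v$3"
    by (smt (verit) zero_le_power2 power_eq_0_iff)
  then show ?thesis
    using u4 v4 by (simp add: vec_eq_iff forall_4)
qed

lemma norm_QQ: "v \<in> QQ \<Longrightarrow> norm v = sqrt 2"
proof -
  assume "v \<in> QQ"
  then have "inner v v = 2"
    by (simp add: QQ_def inner_vec_def sum_4 power2_eq_square)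
  then show ?thesis
    by (simp add: norm_eq_sqrt_inner)
qed

lemma norm_axis_real: "norm (axis i (c::real)) = \<bar>c\<bar>"
  by (simp add: norm_eq_sqrt_inner inner_axis_axis)

lemma continuous_on_if_locally_dominated:
  fixes g :: "'a::metric_space \<Rightarrow> 'b::metric_space" and f :: "'a \<Rightarrow> 'c::metric_space"
  assumes f: "continuous_on UNIV f"
    and dom: "\<And>x. \<forall>\<^sub>F y in at x. dist (g y) (g x) \<le> C * dist (f y) (f x)"
  shows "continuous_on UNIV g"
  unfolding continuous_on_eq_continuous_at[OF open_UNIV]
proof
  fix x
  have "\<forall>\<^sub>F y in at x. norm (dist (g y) (g x)) \<le> C * dist (f y) (f x)"
    using dom[of x] by simp
  moreover have "(f \<longlongrightarrow> f x) (at x)"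
    using f unfolding continuous_on_eq_continuous_at[OF open_UNIV] isCont_def by blast
  then have "((\<lambda>y. C * dist (f y) (f x)) \<longlongrightarrow> 0) (at x)"
    by (intro tendsto_mult_right_zero tendsto_dist_iff[THEN iffD1])
  ultimately have "((\<lambda>y. dist (g y) (g x)) \<longlongrightarrow> 0) (at x)"
    by (rule Lim_null_comparison)
  then show "isCont g x"
    unfolding isCont_def by (rule tendsto_dist_iff[THEN iffD2])
qed

definition lightlike_invariant_on :: "(real^4) set \<Rightarrow> (real^4 \<Rightarrow> 'b) \<Rightarrow> bool" where
  "lightlike_invariant_on S g \<longleftrightarrow> (\<forall>p\<in>S. \<forall>q\<in>S. lightlike (p - q) \<longrightarrow> g p = g q)"

lemma lightlike_invariant_on_axis_step:
  assumes inv: "lightlike_invariant_on S g" and S: "cball p \<bar>l\<bar> \<subseteq> S"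
  shows "g (p + axis i l) = g p"
proof -
  define j where "j = (if i = 4 then 1 else i)"
  have "j \<noteq> 4"
    by (simp add: j_def)
  \<comment> \<open>a point lightlike-related to both \<open>p\<close> and \<open>p + l e\<^sub>i\<close>\<close>
  define m where "m = p + axis j (l/2) + axis 4 (l/2)"
  have "norm (m - p) \<le> \<bar>l\<bar>"
    using norm_triangle_ineq[of "axis j (l/2)" "axis 4 (l/2)"] by (simp add: m_def norm_axis_real)
  then have "m \<in> cball p \<bar>l\<bar>" "p \<in> cball p \<bar>l\<bar>" "p + axis i l \<in> cball p \<bar>l\<bar>"
    by (simp_all add: dist_norm norm_minus_commute norm_axis_real)
  then have "m \<in> S" "p \<in> S" "p + axis i l \<in> S"
    using S by blast+
  moreover have "lightlike (m - p)"
    using \<open>j \<noteq> 4\<close> exhaust_4[of j] by (auto simp: m_def mink_def axis_def)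
  moreover have "lightlike (p + axis i l - m)"
    using \<open>j \<noteq> 4\<close> exhaust_4[of i]
    by (auto simp: j_def m_def mink_def axis_def power2_eq_square field_simps)
  ultimately show ?thesis
    using inv unfolding lightlike_invariant_on_def by metis
qed

lemma lightlike_invariant_on_cball:
  assumes inv: "lightlike_invariant_on S g" and S: "cball r (4 * norm d) \<subseteq> S"
  shows "g (r + d) = g r"
proof -
  have comp: "\<bar>d$k\<bar> \<le> norm d" for k
    by (rule component_le_norm_cart)
  have step: "g (p + axis k (d$k)) = g p" if "dist r p \<le> 3 * norm d" for p k
  proof (rule lightlike_invariant_on_axis_step[OF inv])
    show "cball p \<bar>d$k\<bar> \<subseteq> S"
    proof
      fix z assume "z \<in> cball p \<bar>d$k\<bar>"
      then have "dist r z \<le> 4 * norm d"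
        using that comp[of k] dist_triangle[of r z p] by simp
      then show "z \<in> S"
        using S by auto
    qed
  qed
  define q1 where "q1 = r + axis 1 (d$1)"
  define q2 where "q2 = q1 + axis 2 (d$2)"
  define q3 where "q3 = q2 + axis 3 (d$3)"
  have dist_q1: "dist r q1 \<le> norm d"
    using comp[of 1] by (simp add: q1_def dist_norm norm_axis_real)
  have dist_q2: "dist r q2 \<le> 2 * norm d"
    using comp[of 2] dist_q1 dist_triangle[of r q2 q1] by (simp add: q2_def dist_norm norm_axis_real)
  have dist_q3: "dist r q3 \<le> 3 * norm d"
    using comp[of 3] dist_q2 dist_triangle[of r q3 q2] by (simp add: q3_def dist_norm norm_axis_real)
  have "r + d = q3 + axis 4 (d$4)"
    by (simp add: q3_def q2_def q1_def vec_eq_iff forall_4 axis_def)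
  then have "g (r + d) = g q3"
    using step[OF dist_q3] by simp
  also have "\<dots> = g q2"
    unfolding q3_def using dist_q2 norm_ge_zero[of d] by (intro step) linarith
  also have "\<dots> = g q1"
    unfolding q2_def using dist_q1 norm_ge_zero[of d] by (intro step) linarith
  also have "\<dots> = g r"
    unfolding q1_def using step[of r 1] by simp
  finally show ?thesis .
qed

lemma open_fibre_lightlike_invariant:
  assumes "open S" and inv: "lightlike_invariant_on S g"
  shows "open {x\<in>S. g x = y}"
  unfolding open_contains_ball
proof (intro ballI)
  fix x assume x: "x \<in> {x\<in>S. g x = y}"
  then obtain e where "e > 0" and ball: "ball x e \<subseteq> S"
    using \<open>open S\<close> open_contains_ball by blast
  have "z \<in> S \<and> g z = y" if "z \<in> ball x (e/4)" for z
  proof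
    have "cball x (4 * norm (z - x)) \<subseteq> ball x e"
      using that by (auto simp: dist_norm norm_minus_commute)
    then have "g (x + (z - x)) = g x"
      using ball by (intro lightlike_invariant_on_cball[OF inv]) auto
    then show "g z = y"
      using x by simp
    show "z \<in> S"
      using that ball \<open>e > 0\<close> by auto
  qed
  then show "\<exists>e>0. ball x e \<subseteq> {x\<in>S. g x = y}"
    using \<open>e > 0\<close> by (intro exI[of _ "e/4"]) auto
qed

lemma countable_image_if_open_fibres:
  fixes g :: "'a::second_countable_topology \<Rightarrow> 'b"
  assumes "\<And>y. open {x\<in>S. g x = y}"
  shows "countable (g ` S)"
proof (rule countable_image_inj_on)
  show "countable ((\<lambda>y. {x\<in>S. g x = y}) ` g ` S)"
    using assms by (intro countable_disjoint_open_subsets) (auto simp: pairwise_def disjnt_def)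
  show "inj_on (\<lambda>y. {x\<in>S. g x = y}) (g ` S)"
    by (auto simp: inj_on_def)
qed

locale null_ray_decomposition =
  fixes \<phi> :: "real^4 \<Rightarrow> real^4" and J :: "nat set" and U :: "nat \<Rightarrow> (real^4) set"
    and s :: "nat \<Rightarrow> real^4" and s' :: "real^4" and f :: "real^4 \<Rightarrow> real"
  \<comment> \<open>clause (b) verbatim\<close>
  assumes "countable J"
    and "disjoint_family_on U J"
    and open_pieces: "\<forall>j\<in>J. open (U j)"
    and directions_QQ: "\<forall>j\<in>J. s j \<in> QQ"
    and continuous_f: "continuous_on UNIV f"
    and pieces_separated:
      "\<forall>j\<in>J. \<forall>j'\<in>J. j \<noteq> j' \<longrightarrow> (\<forall>r\<in>U j. \<forall>r'\<in>U j'. \<not> lightlike (r - r'))"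
    and f_off_pieces: "\<forall>r. r \<notin> (\<Union>j\<in>J. U j) \<longrightarrow> f r = 0"
    and \<phi>_eq: "\<forall>r. (\<forall>j\<in>J. r \<in> U j \<longrightarrow> \<phi> r = s' + f r *\<^sub>R s j)
                 \<and> (r \<notin> (\<Union>j\<in>J. U j) \<longrightarrow> \<phi> r = s')"
begin

lemma \<phi>_on_piece: "j \<in> J \<Longrightarrow> r \<in> U j \<Longrightarrow> \<phi> r = s' + f r *\<^sub>R s j"
  using \<phi>_eq by blast

lemma \<phi>_off_pieces: "r \<notin> (\<Union>j\<in>J. U j) \<Longrightarrow> \<phi> r = s'"
  using \<phi>_eq by blast

lemma \<phi>_ray: "\<exists>v. \<phi> r = s' + f r *\<^sub>R v \<and> lightlike v \<and> norm v \<le> sqrt 2"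
proof (cases "r \<in> (\<Union>j\<in>J. U j)")
  case True
  then obtain j where "j \<in> J" "r \<in> U j"
    by blast
  then show ?thesis
    using \<phi>_on_piece directions_QQ lightlike_QQ norm_QQ by fastforce
next
  case False
  then show ?thesis
    using \<phi>_off_pieces by (intro exI[of _ 0]) (simp add: mink_def)
qed

lemma range_subset_light_cone: "range \<phi> \<subseteq> light_cone s'"
proof
  fix x assume "x \<in> range \<phi>"
  then obtain r where "x = \<phi> r"
    by blast
  obtain v where "\<phi> r = s' + f r *\<^sub>R v" "lightlike v"
    using \<phi>_ray by blast
  then show "x \<in> light_cone s'"
    using \<open>x = \<phi> r\<close> by (simp add: light_cone_def mink_scaleR)
qed

lemma lightlike_preserving:
  assumes "lightlike (r1 - r2)"
  shows "lightlike (\<phi> r1 - \<phi> r2)"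
proof -
  have "\<exists>a v. \<phi> r1 - \<phi> r2 = a *\<^sub>R v \<and> lightlike v"
  proof (cases "r1 \<in> (\<Union>j\<in>J. U j)")
    case True
    then obtain j where j: "j \<in> J" "r1 \<in> U j"
      by blast
    have "lightlike (s j)"
      using j directions_QQ lightlike_QQ by blast
    show ?thesis
    proof (cases "r2 \<in> (\<Union>j\<in>J. U j)")
      case True
      then obtain j' where j': "j' \<in> J" "r2 \<in> U j'"
        by blast
      have "j' = j"
        using pieces_separated[rule_format, OF j(1) j'(1) _ j(2) j'(2)] assms by blast
      then have "\<phi> r1 - \<phi> r2 = (f r1 - f r2) *\<^sub>R s j"
        using \<phi>_on_piece[OF j] \<phi>_on_piece[OF j'] by (simp add: algebra_simps)
      then show ?thesis
        using \<open>lightlike (s j)\<close> by blast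
    next
      case False
      then have "\<phi> r1 - \<phi> r2 = f r1 *\<^sub>R s j"
        using \<phi>_on_piece[OF j] \<phi>_off_pieces by simp
      then show ?thesis
        using \<open>lightlike (s j)\<close> by blast
    qed
  next
    case False
    obtain v where "\<phi> r2 = s' + f r2 *\<^sub>R v" "lightlike v"
      using \<phi>_ray by blast
    moreover have "\<phi> r1 = s'"
      using False \<phi>_off_pieces by blast
    ultimately have "\<phi> r1 - \<phi> r2 = (- f r2) *\<^sub>R v \<and> lightlike v"
      by simp
    then show ?thesis
      by blast
  qed
  then show ?thesis
    by (auto simp: mink_scaleR)
qed

lemma locally_dominated_by_f:
  "\<forall>\<^sub>F y in at x. dist (\<phi> y) (\<phi> x) \<le> sqrt 2 * dist (f y) (f x)"
proof (cases "x \<in> (\<Union>j\<in>J. U j)")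
  case True
  then obtain j where j: "j \<in> J" "x \<in> U j"
    by blast
  have "dist (\<phi> y) (\<phi> x) = sqrt 2 * dist (f y) (f x)" if "y \<in> U j" for y
  proof -
    have "\<phi> y - \<phi> x = (f y - f x) *\<^sub>R s j"
      using \<phi>_on_piece[OF j(1) that] \<phi>_on_piece[OF j] by (simp add: algebra_simps)
    then show ?thesis
      using j(1) directions_QQ norm_QQ by (simp add: dist_norm dist_real_def)
  qed
  moreover have "\<forall>\<^sub>F y in at x. y \<in> U j"
    using j open_pieces by (intro eventually_at_in_open') auto
  ultimately show ?thesis
    by (auto elim: eventually_mono)
next
  case False
  have "dist (\<phi> y) (\<phi> x) \<le> sqrt 2 * dist (f y) (f x)" for y
  proof -
    obtain v where v: "\<phi> y = s' + f y *\<^sub>R v" "norm v \<le> sqrt 2"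
      using \<phi>_ray by blast
    have "dist (\<phi> y) (\<phi> x) = \<bar>f y\<bar> * norm v"
      using v(1) \<phi>_off_pieces[OF False] by (simp add: dist_norm)
    also have "\<dots> \<le> \<bar>f y\<bar> * sqrt 2"
      using v(2) by (intro mult_left_mono) auto
    finally show ?thesis
      using False f_off_pieces by (simp add: dist_real_def mult.commute)
  qed
  then show ?thesis
    by simp
qed

lemma continuous_\<phi>: "continuous_on UNIV \<phi>"
  using continuous_f locally_dominated_by_f by (rule continuous_on_if_locally_dominated)

end

lemma cone_map_polar_form:
  fixes \<phi> :: "real^4 \<Rightarrow> real^4"
  assumes cont: "continuous_on UNIV \<phi>"
    and preserving: "\<forall>r1 r2. lightlike (r1 - r2) \<longrightarrow> lightlike (\<phi> r1 - \<phi> r2)"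
    and cone: "range \<phi> \<subseteq> light_cone c"
  obtains f \<sigma> where "continuous_on UNIV f" "\<And>r. \<phi> r = c + f r *\<^sub>R \<sigma> r"
    "\<And>r. f r \<noteq> 0 \<Longrightarrow> \<sigma> r \<in> QQ" "lightlike_invariant_on {r. f r \<noteq> 0} \<sigma>"
proof
  define f where "f r = (\<phi> r - c)$4" for r
  define \<sigma> where "\<sigma> r = (1 / f r) *\<^sub>R (\<phi> r - c)" for r
  have null: "lightlike (\<phi> r - c)" for r
    using cone by (auto simp: light_cone_def)
  show "continuous_on UNIV f"
    unfolding f_def by (intro continuous_intros cont)
  show \<phi>_eq: "\<phi> r = c + f r *\<^sub>R \<sigma> r" for r
    using lightlike_time_zero_imp_zero[OF null[of r]] by (cases "f r = 0") (auto simp: \<sigma>_def f_def)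
  show \<sigma>_QQ: "\<sigma> r \<in> QQ" if "f r \<noteq> 0" for r
    using lightlike_normalized_in_QQ[OF null[of r]] that by (simp add: \<sigma>_def f_def)
  show "lightlike_invariant_on {r. f r \<noteq> 0} \<sigma>"
    unfolding lightlike_invariant_on_def
  proof (intro ballI impI)
    fix p q assume "p \<in> {r. f r \<noteq> 0}" "q \<in> {r. f r \<noteq> 0}" "lightlike (p - q)"
    moreover from \<open>lightlike (p - q)\<close> have "lightlike (f p *\<^sub>R \<sigma> p - f q *\<^sub>R \<sigma> q)"
      using preserving \<phi>_eq[of p] \<phi>_eq[of q] by (metis add_diff_cancel_left)
    ultimately show "\<sigma> p = \<sigma> q"
      using \<sigma>_QQ by (intro QQ_eq_if_lightlike_diff) auto
  qed
qed

lemma null_ray_decomposition_exists: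
  fixes \<phi> :: "real^4 \<Rightarrow> real^4"
  assumes "continuous_on UNIV \<phi>"
    and "\<forall>r1 r2. lightlike (r1 - r2) \<longrightarrow> lightlike (\<phi> r1 - \<phi> r2)"
    and "range \<phi> \<subseteq> light_cone c"
  shows "\<exists>J U s s' f. null_ray_decomposition \<phi> J U s s' f"
proof -
  obtain f \<sigma> where continuous_f: "continuous_on UNIV f" and \<phi>_eq: "\<And>r. \<phi> r = c + f r *\<^sub>R \<sigma> r"
    and \<sigma>_QQ: "\<And>r. f r \<noteq> 0 \<Longrightarrow> \<sigma> r \<in> QQ" and inv: "lightlike_invariant_on {r. f r \<noteq> 0} \<sigma>"
    using cone_map_polar_form[OF assms] by blast
  define V where "V = {r. f r \<noteq> 0}"
  have "open V"
    unfolding V_def using continuous_f by (intro open_Collect_neq continuous_intros)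
  have open_fibre: "open {r\<in>V. \<sigma> r = y}" for y
    using \<open>open V\<close> inv unfolding V_def by (rule open_fibre_lightlike_invariant)
  then have "countable (\<sigma> ` V)"
    by (rule countable_image_if_open_fibres)
  then obtain s and J :: "nat set" where "bij_betw s J (\<sigma> ` V)"
    by (rule countableE_bij)
  then have inj: "inj_on s J" and s_image: "s ` J = \<sigma> ` V"
    by (auto simp: bij_betw_def)
  define U where "U j = {r\<in>V. \<sigma> r = s j}" for j
  have pieces_cover: "(\<Union>j\<in>J. U j) = V"
    using s_image by (force simp: U_def)
  have "null_ray_decomposition \<phi> J U s c f"
  proof
    show "countable J"
      by simp
    show "disjoint_family_on U J"
      using inj by (auto simp: disjoint_family_on_def U_def dest: inj_onD)
    show "\<forall>j\<in>J. open (U j)"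
      by (simp add: U_def open_fibre)
    show "\<forall>j\<in>J. s j \<in> QQ"
    proof
      fix j assume "j \<in> J"
      then obtain r where "r \<in> V" "s j = \<sigma> r"
        using s_image by (metis imageE imageI)
      then show "s j \<in> QQ"
        using \<sigma>_QQ by (simp add: V_def)
    qed
    show "continuous_on UNIV f"
      by (fact continuous_f)
    show "\<forall>j\<in>J. \<forall>j'\<in>J. j \<noteq> j' \<longrightarrow> (\<forall>r\<in>U j. \<forall>r'\<in>U j'. \<not> lightlike (r - r'))"
    proof (intro ballI impI notI)
      fix j j' r r'
      assume "j \<in> J" "j' \<in> J" "j \<noteq> j'" "r \<in> U j" "r' \<in> U j'" "lightlike (r - r')"
      then have "s j = s j'"
        using inv by (auto simp: U_def V_def lightlike_invariant_on_def)
      with inj \<open>j \<in> J\<close> \<open>j' \<in> J\<close> \<open>j \<noteq> j'\<close> show False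
        by (auto dest: inj_onD)
    qed
    show "\<forall>r. r \<notin> (\<Union>j\<in>J. U j) \<longrightarrow> f r = 0"
      using pieces_cover by (simp add: V_def)
    show "\<forall>r. (\<forall>j\<in>J. r \<in> U j \<longrightarrow> \<phi> r = c + f r *\<^sub>R s j) \<and> (r \<notin> (\<Union>j\<in>J. U j) \<longrightarrow> \<phi> r = c)"
    proof (intro allI conjI ballI impI)
      fix r
      show "\<phi> r = c + f r *\<^sub>R s j" if "j \<in> J" "r \<in> U j" for j
        using that \<phi>_eq[of r] by (simp add: U_def)
      show "\<phi> r = c" if "r \<notin> (\<Union>j\<in>J. U j)"
        using that pieces_cover \<phi>_eq[of r] by (simp add: V_def)
    qed
  qed
  then show ?thesis
    by blast
qed

theorem proposition3p1:
  fixes \<phi> :: "real^4 \<Rightarrow> real^4"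
  shows "(continuous_on UNIV \<phi>
          \<and> (\<forall>r1 r2. mink (r1 - r2) (r1 - r2) = 0 \<longrightarrow> mink (\<phi> r1 - \<phi> r2) (\<phi> r1 - \<phi> r2) = 0)
          \<and> (\<exists>r. range \<phi> \<subseteq> light_cone r))
     \<longleftrightarrow>
         (\<exists>(J :: nat set) (U :: nat \<Rightarrow> (real^4) set) (s :: nat \<Rightarrow> real^4) (s' :: real^4) (f :: real^4 \<Rightarrow> real).
            countable J
          \<and> disjoint_family_on U J
          \<and> (\<forall>j\<in>J. open (U j))
          \<and> (\<forall>j\<in>J. s j \<in> QQ)
          \<and> continuous_on UNIV f
          \<and> (\<forall>j\<in>J. \<forall>j'\<in>J. j \<noteq> j' \<longrightarrow> (\<forall>r\<in>U j. \<forall>r'\<in>U j'. mink (r - r') (r - r') \<noteq> 0))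
          \<and> (\<forall>r. r \<notin> (\<Union>j\<in>J. U j) \<longrightarrow> f r = 0)
          \<and> (\<forall>r. (\<forall>j\<in>J. r \<in> U j \<longrightarrow> \<phi> r = s' + f r *\<^sub>R s j)
                 \<and> (r \<notin> (\<Union>j\<in>J. U j) \<longrightarrow> \<phi> r = s')))" (is "?cone_map \<longleftrightarrow> ?decomposition")
proof -
  have "?decomposition \<longleftrightarrow> (\<exists>J U s s' f. null_ray_decomposition \<phi> J U s s' f)"
    by (simp only: null_ray_decomposition_def conj_assoc)
  moreover have "?cone_map \<longleftrightarrow> (\<exists>J U s s' f. null_ray_decomposition \<phi> J U s s' f)"
  proof (intro iffI; elim conjE exE)
    fix c
    assume "continuous_on UNIV \<phi>" "\<forall>r1 r2. lightlike (r1 - r2) \<longrightarrow> lightlike (\<phi> r1 - \<phi> r2)"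
      "range \<phi> \<subseteq> light_cone c"
    then show "\<exists>J U s s' f. null_ray_decomposition \<phi> J U s s' f"
      by (rule null_ray_decomposition_exists)
  next
    fix J U s s' f
    assume "null_ray_decomposition \<phi> J U s s' f"
    then interpret null_ray_decomposition \<phi> J U s s' f .
    show ?cone_map
      using continuous_\<phi> lightlike_preserving range_subset_light_cone by blast
  qed
  ultimately show ?thesis
    by simp
qed

end
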